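(* Let $u=u_1\cdots u_r$ be an allowed word of $\Sigma_A$ with $r\ge2$ and let $\mathcal G=\{u\}$. Then $$\det(\mathbf I-z\,B_{\mathcal G}\circ P_{r-1})=f_u(z),\qquad\text{where } f_u(z)=\tilde\tau_u(z)\det(\mathbf I-zP)+z^{r-1}\delta_u\big(\operatorname{adj}(\mathbf I-zP)\big)_{u_ru_1}.$$
   Context: Let $\Sigma=\{1,\dots,N\}$, $A$ an irreducible $N\times N$ $0$–$1$ matrix, $\Sigma_A=\{x\in\Sigma^{\mathbb N}:A_{x_nx_{n+1}}=1\ \forall n\}$; $\mathcal L_n$ is the set of allowed words of length $n$ (occurring in some element of $\Sigma_A$). $P$ is a row-stochastic matrix with $P_{ij}>0$ iff $A_{ij}=1$. For $X=x_1\cdots x_n,Y=y_1\cdots y_n\in\mathcal L_n$ with $x_2\cdots x_n=y_1\cdots y_{n-1}$ (vacuous if $n=1$), $X*Y=x_1\cdots x_ny_n$. $P_n$ is indexed by $\mathcal L_n$ with $(P_n)_{XY}=P_{x_ny_n}$ if $X*Y$ is defined and lies in $\mathcal L_{n+1}$, and $0$ otherwise. $B_{\{u\}}$ is the $0$–$1$ matrix indexed by $\mathcal L_{r-1}$ with entry $1$ at $(X,Y)$ iff $X*Y$ is defined, lies in $\mathcal L_r$, and $X*Y\ne u$ (for $r-1\ge1$; when $r=2$ this is indexed by $\Sigma=\mathcal L_1$). $\circ$ is the Hadamard product, $\operatorname{adj}$ the adjugate. $\delta_u=P_{u_1u_2}\cdots P_{u_{r-1}u_r}$; for $0\le s\le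 r-1$, $c_{s,u,u}=1$ if $u_{s+1}\cdots u_r=u_1\cdots u_{r-s}$ and $0$ otherwise, $\delta_{s,u,u}=\prod_{j=r-s}^{r-1}P_{u_ju_{j+1}}$ (empty product $=1$), $\tau_u(z)=\sum_{s=0}^{r-1}c_{s,u,u}\delta_{s,u,u}z^s$, and $\tilde\tau_u(z)=\tau_u(z)-z^{r-1}c_{r-1,u,u}\delta_u$. *)

theory Defs
  imports "HOL-Analysis.Analysis"
begin

text \<open>Alphabet \<Sigma> = {1..N}; words are lists over nat; A is a 0-1 matrix given as a
function nat => nat => nat, P a real matrix nat => nat => real (only entries on
\<Sigma> matter).\<close>

definition alphabet :: "nat \<Rightarrow> nat set" where
  "alphabet N = {1..N}"

definition zero_one_matrix :: "nat \<Rightarrow> (nat \<Rightarrow> nat \<Rightarrow> nat) \<Rightarrow> bool" where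
  "zero_one_matrix N A \<longleftrightarrow> (\<forall>i\<in>alphabet N. \<forall>j\<in>alphabet N. A i j \<in> {0,1})"

text \<open>Irreducible: for all i, j there is n \<ge> 1 with (A^n)_{ij} > 0, i.e. a path
of positive length from i to j along allowed transitions.\<close>
definition irreducible_01 :: "nat \<Rightarrow> (nat \<Rightarrow> nat \<Rightarrow> nat) \<Rightarrow> bool" where
  "irreducible_01 N A \<longleftrightarrow>
     (\<forall>i\<in>alphabet N. \<forall>j\<in>alphabet N. \<exists>w::nat list.
        length w \<ge> 2 \<and> hd w = i \<and> last w = j \<and> set w \<subseteq> alphabet N \<and>
        (\<forall>k. Suc k < length w \<longrightarrow> A (w ! k) (w ! Suc k) = 1))"

definition shift_space :: "nat \<Rightarrow> (nat \<Rightarrow> nat \<Rightarrow> nat) \<Rightarrow> (nat \<Rightarrow> nat) set" where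
  "shift_space N A = {x. (\<forall>n. x n \<in> alphabet N) \<and> (\<forall>n. A (x n) (x (Suc n)) = 1)}"

definition allowed_words :: "nat \<Rightarrow> (nat \<Rightarrow> nat \<Rightarrow> nat) \<Rightarrow> nat \<Rightarrow> nat list set" where
  "allowed_words N A n = {w. \<exists>x\<in>shift_space N A. \<exists>k. w = map x [k..<k+n]}"

definition row_stochastic_compatible ::
  "nat \<Rightarrow> (nat \<Rightarrow> nat \<Rightarrow> nat) \<Rightarrow> (nat \<Rightarrow> nat \<Rightarrow> real) \<Rightarrow> bool" where
  "row_stochastic_compatible N A P \<longleftrightarrow>
     (\<forall>i\<in>alphabet N. \<forall>j\<in>alphabet N. P i j \<ge> 0 \<and> (P i j > 0 \<longleftrightarrow> A i j = 1)) \<and>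
     (\<forall>i\<in>alphabet N. (\<Sum>j\<in>alphabet N. P i j) = 1)"

definition star_defined :: "nat list \<Rightarrow> nat list \<Rightarrow> bool" where
  "star_defined X Y \<longleftrightarrow> length X = length Y \<and> X \<noteq> [] \<and> tl X = butlast Y"

definition star :: "nat list \<Rightarrow> nat list \<Rightarrow> nat list" where
  "star X Y = X @ [last Y]"

definition higher_block_P ::
  "nat \<Rightarrow> (nat \<Rightarrow> nat \<Rightarrow> nat) \<Rightarrow> (nat \<Rightarrow> nat \<Rightarrow> real) \<Rightarrow> nat \<Rightarrow> nat list \<Rightarrow> nat list \<Rightarrow> real" where
  "higher_block_P N A P n X Y =
     (if star_defined X Y \<and> star X Y \<in> allowed_words N A (Suc n) then P (last X) (last Y) else 0)"

definition B_single ::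
  "nat \<Rightarrow> (nat \<Rightarrow> nat \<Rightarrow> nat) \<Rightarrow> nat list \<Rightarrow> nat list \<Rightarrow> nat list \<Rightarrow> real" where
  "B_single N A u X Y =
     (if star_defined X Y \<and> star X Y \<in> allowed_words N A (length u) \<and> star X Y \<noteq> u then 1 else 0)"

definition hadamard :: "('i \<Rightarrow> 'i \<Rightarrow> 'a::times) \<Rightarrow> ('i \<Rightarrow> 'i \<Rightarrow> 'a) \<Rightarrow> 'i \<Rightarrow> 'i \<Rightarrow> 'a" where
  "hadamard M M' i j = M i j * M' i j"

definition det_on :: "'i set \<Rightarrow> ('i \<Rightarrow> 'i \<Rightarrow> 'a::comm_ring_1) \<Rightarrow> 'a" where
  "det_on I M = (\<Sum>p\<in>{p. p permutes I}. of_int (sign p) * (\<Prod>i\<in>I. M i (p i)))"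

text \<open>Adjugate: adj(M)_{ij} is the (j,i) cofactor, i.e. the determinant of M with
row j replaced by the i-th unit row vector.\<close>
definition adj_on :: "'i set \<Rightarrow> ('i \<Rightarrow> 'i \<Rightarrow> 'a::comm_ring_1) \<Rightarrow> 'i \<Rightarrow> 'i \<Rightarrow> 'a" where
  "adj_on I M i j = det_on I (\<lambda>a b. if a = j then (if b = i then 1 else 0) else M a b)"

definition id_minus :: "'a::comm_ring_1 \<Rightarrow> ('i \<Rightarrow> 'i \<Rightarrow> 'a) \<Rightarrow> 'i \<Rightarrow> 'i \<Rightarrow> 'a" where
  "id_minus z M i j = (if i = j then 1 else 0) - z * M i j"

text \<open>Quantities attached to u = u_1..u_r (list index k corresponds to u_{k+1}).\<close>
definition delta_u :: "(nat \<Rightarrow> nat \<Rightarrow> real) \<Rightarrow> nat list \<Rightarrow> real" where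
  "delta_u P u = (\<Prod>j\<in>{1..length u - 1}. P (u ! (j - 1)) (u ! j))"

definition c_uu :: "nat \<Rightarrow> nat list \<Rightarrow> real" where
  "c_uu s u = (if drop s u = take (length u - s) u then 1 else 0)"

definition delta_s_uu :: "(nat \<Rightarrow> nat \<Rightarrow> real) \<Rightarrow> nat \<Rightarrow> nat list \<Rightarrow> real" where
  "delta_s_uu P s u = (\<Prod>j\<in>{length u - s..length u - 1}. P (u ! (j - 1)) (u ! j))"

definition tau_u :: "(nat \<Rightarrow> nat \<Rightarrow> real) \<Rightarrow> nat list \<Rightarrow> complex \<Rightarrow> complex" where
  "tau_u P u z = (\<Sum>s\<in>{0..length u - 1}. of_real (c_uu s u * delta_s_uu P s u) * z ^ s)"

definition tau_tilde_u :: "(nat \<Rightarrow> nat \<Rightarrow> real) \<Rightarrow> nat list \<Rightarrow> complex \<Rightarrow> complex" where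
  "tau_tilde_u P u z = tau_u P u z
     - z ^ (length u - 1) * of_real (c_uu (length u - 1) u * delta_u P u)"

definition f_u :: "nat \<Rightarrow> (nat \<Rightarrow> nat \<Rightarrow> real) \<Rightarrow> nat list \<Rightarrow> complex \<Rightarrow> complex" where
  "f_u N P u z =
     tau_tilde_u P u z * det_on (alphabet N) (id_minus z (\<lambda>i j. of_real (P i j)))
     + z ^ (length u - 1) * of_real (delta_u P u)
       * adj_on (alphabet N) (id_minus z (\<lambda>i j. of_real (P i j))) (last u) (hd u)"

end

theory Submission
  imports Defs "Jordan_Normal_Form.Determinant" "HOL-Computational_Algebra.Polynomial"
begin

text \<open>Write \<open>M\<^sub>n = I - z P\<^sub>n\<close>. Factoring \<open>M\<^sub>n\<^sub>+\<^sub>1\<close> through the maps ``delete the first letter''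
  and ``append a letter'' and applying Sylvester's identity \<open>det (I - D E) = det (I - E D)\<close> shows
  \<open>det M\<^sub>n = det (I - z P)\<close> for all \<open>n \<ge> 1\<close>. Over the polynomial ring in \<open>z\<close>, where this
  determinant is nonzero, the adjugate of \<open>M\<^sub>n\<close> can be written down explicitly through correlation
  polynomials of words and the adjugate of \<open>I - z P\<close>. Forbidding \<open>u\<close> deletes the single entry of
  \<open>P\<^sub>r\<^sub>-\<^sub>1\<close> at \<open>(u\<^sub>1\<cdots>u\<^sub>r\<^sub>-\<^sub>1, u\<^sub>2\<cdots>u\<^sub>r)\<close>, so the determinant changes by
  \<open>z P\<^bsub>u\<^sub>r\<^sub>-\<^sub>1u\<^sub>r\<^esub>\<close> times one adjugate entry of \<open>M\<^sub>r\<^sub>-\<^sub>1\<close>, and evaluating that entry gives \<open>f\<^sub>u\<close>.\<close>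

section \<open>Determinants over finite index sets\<close>

lemma det_on_cong:
  assumes "\<And>a b. a \<in> I \<Longrightarrow> b \<in> I \<Longrightarrow> M a b = M' a b"
  shows "det_on I M = det_on I M'"
  unfolding det_on_def
proof (intro sum.cong arg_cong[where f = "(*) _"] prod.cong refl)
  fix q i assume "q \<in> {p. p permutes I}" "i \<in> I"
  then show "M i (q i) = M' i (q i)" using assms by (simp add: permutes_in_image)
qed

lemma bij_betw_map_permutation:
  assumes f: "bij_betw f A B"
  shows "bij_betw (map_permutation A f) {p. p permutes A} {q. q permutes B}"
proof (rule bij_betw_byWitness[where f' = "map_permutation B (inv_into A f)"])
  have inj: "inj_on f A" using f by (rule bij_betw_imp_inj_on)
  have f': "bij_betw (inv_into A f) B A" using f by (rule bij_betw_inv_into)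
  show "\<forall>p\<in>{p. p permutes A}. map_permutation B (inv_into A f) (map_permutation A f p) = p"
    using map_permutation_compose_inv[OF f] inj by auto
  show "\<forall>q\<in>{q. q permutes B}. map_permutation A f (map_permutation B (inv_into A f) q) = q"
    using map_permutation_compose_inv[OF f'] f by (auto simp: bij_betw_def f_inv_into_f)
  show "map_permutation A f ` {p. p permutes A} \<subseteq> {q. q permutes B}"
    using map_permutation_permutes[OF f] by auto
  show "map_permutation B (inv_into A f) ` {q. q permutes B} \<subseteq> {p. p permutes A}"
    using map_permutation_permutes[OF f'] by auto
qed

lemma det_on_reindex:
  assumes f: "bij_betw f A B" and fin: "finite A"
  shows "det_on B M = det_on A (\<lambda>i j. M (f i) (f j))"
proof -
  have inj: "inj_on f A" using f by (rule bij_betw_imp_inj_on)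
  have "det_on B M = (\<Sum>p | p permutes A.
      of_int (sign (map_permutation A f p)) * (\<Prod>b\<in>B. M b (map_permutation A f p b)))"
    unfolding det_on_def by (rule sum.reindex_bij_betw[OF bij_betw_map_permutation[OF f], symmetric])
  also have "\<dots> = det_on A (\<lambda>i j. M (f i) (f j))"
    unfolding det_on_def
  proof (rule sum.cong[OF refl])
    fix p assume p: "p \<in> {p. p permutes A}"
    have "(\<Prod>b\<in>B. M b (map_permutation A f p b)) = (\<Prod>i\<in>A. M (f i) (map_permutation A f p (f i)))"
      by (rule prod.reindex_bij_betw[OF f, symmetric])
    also have "\<dots> = (\<Prod>i\<in>A. M (f i) (f (p i)))"
      by (simp add: map_permutation_apply[OF inj])
    finally show "of_int (sign (map_permutation A f p)) * (\<Prod>b\<in>B. M b (map_permutation A f p b))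
        = of_int (sign p) * (\<Prod>i\<in>A. M (f i) (f (p i)))"
      using sign_map_permutation[OF inj _ fin] p by simp
  qed
  finally show ?thesis .
qed

lemma det_on_eq_det_mat:
  fixes M :: "'i \<Rightarrow> 'i \<Rightarrow> 'a::comm_ring_1"
  assumes h: "bij_betw h {0..<card I} I"
  shows "det_on I M = det (mat (card I) (card I) (\<lambda>(i, j). M (h i) (h j)))"
proof -
  have "det_on {0..<n} M' = det (mat n n (\<lambda>(i, j). M' i j))" for n and M' :: "nat \<Rightarrow> nat \<Rightarrow> 'a"
    unfolding det_on_def det_def by (auto intro!: sum.cong prod.cong)
  then show ?thesis by (simp add: det_on_reindex[OF h])
qed

lemma mat_reindex_mult:
  assumes g: "bij_betw g {0..<k} K"
  shows "mat m n (\<lambda>(i, j). \<Sum>c\<in>K. D (h i) c * E c (h' j))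
       = mat m k (\<lambda>(i, l). D (h i) (g l)) * mat k n (\<lambda>(l, j). E (g l) (h' j))"
proof (rule eq_matI)
  fix i j assume "i < dim_row (mat m k (\<lambda>(i, l). D (h i) (g l)) * mat k n (\<lambda>(l, j). E (g l) (h' j)))"
    and "j < dim_col (mat m k (\<lambda>(i, l). D (h i) (g l)) * mat k n (\<lambda>(l, j). E (g l) (h' j)))"
  then show "mat m n (\<lambda>(i, j). \<Sum>c\<in>K. D (h i) c * E c (h' j)) $$ (i, j)
      = (mat m k (\<lambda>(i, l). D (h i) (g l)) * mat k n (\<lambda>(l, j). E (g l) (h' j))) $$ (i, j)"
    using sum.reindex_bij_betw[OF g, of "\<lambda>c. D (h i) c * E c (h' j)"] by (simp add: scalar_prod_def)
qed auto

lemma mat_reindex_one_minus: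
  assumes "inj_on h {0..<n}"
  shows "mat n n (\<lambda>(i, j). (if h i = h j then 1 else 0) - F i j) = 1\<^sub>m n - mat n n (\<lambda>(i, j). F i j)"
  using assms by (intro eq_matI) (auto simp: inj_on_def)

lemma det_on_mult:
  fixes M M' :: "'i \<Rightarrow> 'i \<Rightarrow> 'a::comm_ring_1"
  assumes "finite I"
  shows "det_on I (\<lambda>a b. \<Sum>c\<in>I. M a c * M' c b) = det_on I M * det_on I M'"
proof -
  obtain h where h: "bij_betw h {0..<card I} I"
    using ex_bij_betw_nat_finite[OF assms] by blast
  show ?thesis
    unfolding det_on_eq_det_mat[OF h] mat_reindex_mult[OF h, of _ _ M h M' h]
    by (rule det_mult) auto
qed

lemma det_on_identity:
  assumes "finite I"
  shows "det_on I (\<lambda>a b. if a = b then 1 else 0) = (1::'a::comm_ring_1)"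
proof -
  obtain h where h: "bij_betw h {0..<card I} I"
    using ex_bij_betw_nat_finite[OF assms] by blast
  have "mat (card I) (card I) (\<lambda>(i, j). if h i = h j then 1 else 0) = (1\<^sub>m (card I) :: 'a mat)"
    using h by (intro eq_matI) (auto simp: bij_betw_def inj_on_def)
  then show ?thesis by (simp add: det_on_eq_det_mat[OF h])
qed

lemma det_on_identical_rows:
  fixes M :: "'i \<Rightarrow> 'i \<Rightarrow> 'a::comm_ring_1"
  assumes fin: "finite I" and "a \<in> I" "b \<in> I" "a \<noteq> b"
    and rows: "\<And>j. j \<in> I \<Longrightarrow> M a j = M b j"
  shows "det_on I M = 0"
proof -
  obtain h where h: "bij_betw h {0..<card I} I"
    using ex_bij_betw_nat_finite[OF fin] by blast
  obtain i0 j0 where "i0 < card I" "h i0 = a" "j0 < card I" "h j0 = b"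
    using h \<open>a \<in> I\<close> \<open>b \<in> I\<close> unfolding bij_betw_def by (metis atLeastLessThan_iff imageE)
  moreover have "\<And>l. l < card I \<Longrightarrow> h l \<in> I" using h by (auto simp: bij_betw_def)
  ultimately show ?thesis
    unfolding det_on_eq_det_mat[OF h] using \<open>a \<noteq> b\<close> rows
    by (intro det_identical_rows[of _ "card I" i0 j0] eq_vecI) auto
qed

lemma det_one_minus_mult_commute:
  fixes D :: "'a::idom mat"
  assumes D: "D \<in> carrier_mat m k" and E: "E \<in> carrier_mat k m"
  shows "det (1\<^sub>m m - D * E) = det (1\<^sub>m k - E * D)"
proof -
  let ?T = "four_block_mat (1\<^sub>m m) D E (1\<^sub>m k)"
  have T: "?T \<in> carrier_mat (m + k) (m + k)" using D E by auto
  have "det ?T = det (?T * four_block_mat (1\<^sub>m m) (0\<^sub>m m k) (-E) (1\<^sub>m k))"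
    using D E by (subst det_mult[OF T]) (auto simp: det_four_block_mat_upper_right_zero[of _ m _ k])
  also have "?T * four_block_mat (1\<^sub>m m) (0\<^sub>m m k) (-E) (1\<^sub>m k)
      = four_block_mat (1\<^sub>m m - D * E) D (0\<^sub>m k m) (1\<^sub>m k)"
    using D E by (subst mult_four_block_mat[of _ m m _ k _ k]) (auto simp: mult_minus_distrib_mat)
  also have "det \<dots> = det (1\<^sub>m m - D * E)"
    using D E by (subst det_four_block_mat_lower_left_zero[of _ m _ k]) auto
  finally have left: "det ?T = det (1\<^sub>m m - D * E)" .
  have "det ?T = det (?T * four_block_mat (1\<^sub>m m) (-D) (0\<^sub>m k m) (1\<^sub>m k))"
    using D E by (subst det_mult[OF T]) (auto simp: det_four_block_mat_lower_left_zero[of _ m _ k])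
  also have "?T * four_block_mat (1\<^sub>m m) (-D) (0\<^sub>m k m) (1\<^sub>m k)
      = four_block_mat (1\<^sub>m m) (0\<^sub>m m k) E (1\<^sub>m k - E * D)"
    using D E by (subst mult_four_block_mat[of _ m m _ k _ k]) (auto simp: mult_minus_distrib_mat)
  also have "det \<dots> = det (1\<^sub>m k - E * D)"
    using D E by (subst det_four_block_mat_upper_right_zero[of _ m _ k]) auto
  finally show ?thesis using left by simp
qed

lemma det_on_one_minus_mult_commute:
  fixes D :: "'i \<Rightarrow> 'k \<Rightarrow> 'a::idom" and E :: "'k \<Rightarrow> 'i \<Rightarrow> 'a"
  assumes "finite I" "finite K"
  shows "det_on I (\<lambda>a b. (if a = b then 1 else 0) - (\<Sum>c\<in>K. D a c * E c b))
       = det_on K (\<lambda>a b. (if a = b then 1 else 0) - (\<Sum>c\<in>I. E a c * D c b))"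
proof -
  obtain h where h: "bij_betw h {0..<card I} I"
    using ex_bij_betw_nat_finite[OF assms(1)] by blast
  obtain g where g: "bij_betw g {0..<card K} K"
    using ex_bij_betw_nat_finite[OF assms(2)] by blast
  have "inj_on h {0..<card I}" "inj_on g {0..<card K}"
    using h g by (auto simp: bij_betw_def)
  then show ?thesis
    unfolding det_on_eq_det_mat[OF h] det_on_eq_det_mat[OF g]
    by (simp add: mat_reindex_one_minus mat_reindex_mult[OF g, of _ _ D h E h]
        mat_reindex_mult[OF h, of _ _ E g D g] det_one_minus_mult_commute)
qed

lemma det_on_row_linear:
  fixes M :: "'i \<Rightarrow> 'i \<Rightarrow> 'a::comm_ring_1"
  assumes "finite I" "k \<in> I"
  shows "det_on I (\<lambda>a b. if a = k then (\<Sum>c\<in>S. f c * R c b) else M a b)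
       = (\<Sum>c\<in>S. f c * det_on I (\<lambda>a b. if a = k then R c b else M a b))"
proof -
  have "(\<Prod>i\<in>I. if i = k then (\<Sum>c\<in>S. f c * R c (p i)) else M i (p i))
      = (\<Sum>c\<in>S. f c * (\<Prod>i\<in>I. if i = k then R c (p i) else M i (p i)))" for p
    using assms by (simp add: prod.remove sum_distrib_right mult.assoc)
  then show ?thesis
    unfolding det_on_def by (simp add: sum_distrib_left sum.swap[of _ S] mult.left_commute)
qed

lemma mult_adj_on:
  fixes M :: "'i \<Rightarrow> 'i \<Rightarrow> 'a::comm_ring_1"
  assumes fin: "finite I" and "a \<in> I" "b \<in> I"
  shows "(\<Sum>c\<in>I. M a c * adj_on I M c b) = (if a = b then det_on I M else 0)"
proof -
  have "(\<Sum>c\<in>I. M a c * adj_on I M c b)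
      = det_on I (\<lambda>x y. if x = b then (\<Sum>c\<in>I. M a c * (if y = c then 1 else 0)) else M x y)"
    unfolding adj_on_def by (rule det_on_row_linear[OF fin \<open>b \<in> I\<close>, symmetric])
  also have "\<dots> = det_on I (\<lambda>x y. if x = b then M a y else M x y)"
    using fin by (intro det_on_cong) (simp add: if_distrib[of "(*) _"] cong: if_cong)
  also have "\<dots> = (if a = b then det_on I M else 0)"
    using assms by (auto intro: det_on_identical_rows det_on_cong)
  finally show ?thesis .
qed

lemma det_on_diagonal_except_row:
  fixes M :: "'i \<Rightarrow> 'i \<Rightarrow> 'a::comm_ring_1"
  assumes fin: "finite I" and k: "k \<in> I"
    and diag: "\<And>a b. a \<in> I \<Longrightarrow> b \<in> I \<Longrightarrow> a \<noteq> k \<Longrightarrow> M a b = (if a = b then d else 0)"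
  shows "det_on I M = d ^ (card I - 1) * M k k"
proof -
  have off_diagonal: "(\<Prod>i\<in>I. M i (p i)) = 0" if p: "p permutes I" "p \<noteq> id" for p
  proof -
    have "\<exists>j\<in>I. j \<noteq> k \<and> p j \<noteq> j"
    proof (rule ccontr)
      assume "\<not> ?thesis"
      then have fix_all: "p j = j" if "j \<noteq> k" for j
        using that p(1) by (meson permutes_not_in)
      then have "p k = k" using p(1) by (metis permutes_inj inj_eq)
      then show False using fix_all p(2) by (metis eq_id_iff)
    qed
    then obtain j where "j \<in> I" "j \<noteq> k" "M j (p j) = 0"
      using diag p(1) by (metis permutes_in_image)
    then show ?thesis using fin by (meson prod_zero)
  qed
  have "det_on I M = (\<Prod>i\<in>I. M i i)"
    unfolding det_on_def
    by (subst sum.mono_neutral_right[of _ "{id}"])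
       (use fin in \<open>auto simp: permutes_id finite_permutations off_diagonal\<close>)
  also have "\<dots> = M k k * (\<Prod>i\<in>I - {k}. d)"
    using fin k diag by (simp add: prod.remove)
  finally show ?thesis using fin k by (simp add: card_Diff_singleton mult.commute)
qed

lemma det_on_add_single_entry:
  fixes M G :: "'i \<Rightarrow> 'i \<Rightarrow> 'a::idom"
  assumes fin: "finite I" and i: "i \<in> I" and j: "j \<in> I"
    and inverse: "\<And>a b. a \<in> I \<Longrightarrow> b \<in> I \<Longrightarrow> (\<Sum>c\<in>I. M a c * G c b) = of_bool (a = b) * det_on I M"
    and nonzero: "det_on I M \<noteq> 0"
  shows "det_on I (\<lambda>a b. M a b + of_bool (a = i \<and> b = j) * t) = det_on I M + t * G j i"
proof -
  let ?d = "det_on I M" and ?M' = "\<lambda>a b. M a b + of_bool (a = i \<and> b = j) * t"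
  have "?d * det_on I G = det_on I (\<lambda>a b. of_bool (a = b) * ?d)"
    by (simp add: det_on_mult[OF fin, symmetric] inverse cong: det_on_cong)
  also have "\<dots> = ?d ^ (card I - 1) * ?d"
    by (subst det_on_diagonal_except_row[OF fin i, where d = ?d]) auto
  finally have det_G: "det_on I G = ?d ^ (card I - 1)"
    using nonzero by (simp add: mult.commute)
  have "(\<Sum>c\<in>I. ?M' a c * G c b) = of_bool (a = b) * ?d + of_bool (a = i) * t * G j b"
    if "a \<in> I" "b \<in> I" for a b
    using that fin j by (simp add: distrib_right sum.distrib inverse mult.assoc)
  then have "det_on I ?M' * det_on I G
      = det_on I (\<lambda>a b. of_bool (a = b) * ?d + of_bool (a = i) * t * G j b)"
    by (simp add: det_on_mult[OF fin, symmetric] cong: det_on_cong)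
  also have "\<dots> = ?d ^ (card I - 1) * (?d + t * G j i)"
    by (subst det_on_diagonal_except_row[OF fin i, where d = ?d]) auto
  finally show ?thesis
    using nonzero by (simp add: det_G mult.commute)
qed

section \<open>Allowed words\<close>

lemma allowed_wordsD:
  assumes "w \<in> allowed_words N A n"
  shows "length w = n" "set w \<subseteq> alphabet N" "\<And>k. Suc k < n \<Longrightarrow> A (w ! k) (w ! Suc k) = 1"
  using assms by (auto simp: allowed_words_def shift_space_def)

lemma allowed_wordsI:
  assumes "x \<in> shift_space N A" "w = map x [k..<k + n]"
  shows "w \<in> allowed_words N A n"
  using assms unfolding allowed_words_def by blast

lemma finite_allowed_words: "finite (allowed_words N A n)"
proof (rule finite_subset)
  show "allowed_words N A n \<subseteq> {w. set w \<subseteq> alphabet N \<and> length w = n}"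
    using allowed_wordsD by blast
  show "finite {w. set w \<subseteq> alphabet N \<and> length w = n}"
    by (rule finite_lists_length_eq) (simp add: alphabet_def)
qed

lemma allowed_words_tl:
  assumes "w \<in> allowed_words N A n"
  shows "tl w \<in> allowed_words N A (n - 1)"
proof -
  obtain x k where x: "x \<in> shift_space N A" and w: "w = map x [k..<k + n]"
    using assms by (auto simp: allowed_words_def)
  have "tl w = map x [Suc k..<Suc k + (n - 1)]"
    by (cases n) (simp_all add: w map_tl[symmetric])
  with x show ?thesis by (rule allowed_wordsI)
qed

lemma allowed_words_butlast:
  assumes "w \<in> allowed_words N A n"
  shows "butlast w \<in> allowed_words N A (n - 1)"
proof -
  obtain x k where x: "x \<in> shift_space N A" and w: "w = map x [k..<k + n]"
    using assms by (auto simp: allowed_words_def)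
  have "butlast w = map x [k..<k + (n - 1)]"
    by (cases n) (simp_all add: w map_butlast[symmetric])
  with x show ?thesis by (rule allowed_wordsI)
qed

lemma allowed_words_Cons:
  assumes Y: "Y \<in> allowed_words N A n" and "n \<ge> 1" and a: "a \<in> alphabet N"
    and aY: "A a (hd Y) = 1"
  shows "a # Y \<in> allowed_words N A (Suc n)"
proof -
  obtain y k where y: "y \<in> shift_space N A" and Y_eq: "Y = map y [k..<k + n]"
    using Y by (auto simp: allowed_words_def)
  define x where "x m = (if m = 0 then a else y (k + m - 1))" for m
  have "hd Y = y k" using Y_eq \<open>n \<ge> 1\<close> by (simp add: upt_rec)
  then have "A (x m) (x (Suc m)) = 1" for m
    using y aY by (cases m) (auto simp: x_def shift_space_def)
  then have "x \<in> shift_space N A"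
    using y a by (simp add: shift_space_def x_def)
  moreover have "a # Y = map x [0..<0 + Suc n]"
    by (rule nth_equalityI) (auto simp: Y_eq x_def nth_Cons' simp del: upt_Suc)
  ultimately show ?thesis by (rule allowed_wordsI)
qed

lemma irreducible_01_successor:
  assumes "irreducible_01 N A" "i \<in> alphabet N"
  shows "\<exists>j\<in>alphabet N. A i j = 1"
proof -
  obtain w where w: "length w \<ge> 2" "hd w = i" "set w \<subseteq> alphabet N"
    "\<And>k. Suc k < length w \<Longrightarrow> A (w ! k) (w ! Suc k) = 1"
    using assms unfolding irreducible_01_def by blast
  have "w ! 0 = i" using w(1,2) by (cases w) auto
  moreover have "w ! 1 \<in> set w" using w(1) by (intro nth_mem) simp
  ultimately have "w ! 0 = i" "w ! 1 \<in> alphabet N" using w(3) by auto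
  then show ?thesis using w(1) w(4)[of 0] by auto
qed

lemma irreducible_01_shift_space_from:
  assumes irr: "irreducible_01 N A" and c: "c \<in> alphabet N"
  shows "\<exists>x\<in>shift_space N A. x 0 = c"
proof -
  define next_letter where "next_letter i = (SOME j. j \<in> alphabet N \<and> A i j = 1)" for i
  have next_letter: "next_letter i \<in> alphabet N \<and> A i (next_letter i) = 1" if "i \<in> alphabet N" for i
    using someI_ex[OF irreducible_01_successor[OF irr that, unfolded Bex_def]]
    by (simp add: next_letter_def)
  define x where "x = rec_nat c (\<lambda>_. next_letter)"
  have x_in: "x m \<in> alphabet N" for m
    by (induction m) (simp_all add: x_def c next_letter)
  then have "x \<in> shift_space N A"
    using next_letter by (simp add: shift_space_def x_def)
  moreover have "x 0 = c" by (simp add: x_def)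
  ultimately show ?thesis by blast
qed

lemma allowed_words_singleton:
  assumes "irreducible_01 N A" "c \<in> alphabet N"
  shows "[c] \<in> allowed_words N A 1"
proof -
  obtain x where "x \<in> shift_space N A" "x 0 = c"
    using irreducible_01_shift_space_from[OF assms] by blast
  then show ?thesis by (intro allowed_wordsI[of x _ _ _ 0]) auto
qed

lemma allowed_words_snoc:
  assumes irr: "irreducible_01 N A" and W: "W \<in> allowed_words N A n" and "n \<ge> 1"
    and c: "c \<in> alphabet N" and Wc: "A (last W) c = 1"
  shows "W @ [c] \<in> allowed_words N A (Suc n)"
proof -
  obtain x k where x: "x \<in> shift_space N A" and W_eq: "W = map x [k..<k + n]"
    using W by (auto simp: allowed_words_def)
  obtain y where y: "y \<in> shift_space N A" "y 0 = c"
    using irreducible_01_shift_space_from[OF irr c] by blast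
  define x' where "x' m = (if m < n then x (k + m) else y (m - n))" for m
  have last_W: "last W = x (k + n - 1)" using W_eq \<open>n \<ge> 1\<close> by (simp add: last_map)
  have "A (x' m) (x' (Suc m)) = 1" for m
  proof -
    consider "Suc m < n" | "Suc m = n" | "n \<le> m" by linarith
    then show ?thesis
    proof cases
      case 1 then show ?thesis using x by (simp add: x'_def shift_space_def)
    next
      case 2
      then have "x' m = last W" "x' (Suc m) = c" using last_W y by (auto simp: x'_def)
      with Wc show ?thesis by simp
    next
      case 3 then show ?thesis using y by (simp add: x'_def shift_space_def Suc_diff_le)
    qed
  qed
  then have "x' \<in> shift_space N A"
    using x y by (simp add: shift_space_def x'_def)
  moreover have "W @ [c] = map x' [0..<0 + Suc n]"
    by (rule nth_equalityI) (auto simp: W_eq x'_def nth_append y(2) simp del: upt_Suc)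
  ultimately show ?thesis by (rule allowed_wordsI)
qed

lemma finite_alphabet [simp]: "finite (alphabet N)"
  by (simp add: alphabet_def)

lemma star_defined_star_eq_iff:
  assumes "length u \<ge> 2"
  shows "star_defined X Y \<and> star X Y = u \<longleftrightarrow> X = butlast u \<and> Y = tl u"
proof
  assume "star_defined X Y \<and> star X Y = u"
  then have u: "u = X @ [last Y]" and X: "X \<noteq> []" "tl X = butlast Y" and "Y \<noteq> []"
    by (auto simp: star_def star_defined_def)
  then have "Y = tl u" by (metis append_butlast_last_id tl_append2)
  moreover have "X = butlast u" using u by (metis butlast_snoc)
  ultimately show "X = butlast u \<and> Y = tl u" by simp
next
  assume "X = butlast u \<and> Y = tl u"
  with assms show "star_defined X Y \<and> star X Y = u"
    by (cases u) (auto simp: star_def star_defined_def butlast_tl last_tl)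
qed

lemma drop_tl_snoc_eq_take_iff:
  assumes "k < n" "length Z = n" "length X = n"
  shows "drop k (tl Z @ [c]) = take (n - k) X
     \<longleftrightarrow> drop (Suc k) Z = take (n - Suc k) X \<and> c = X ! (n - Suc k)"
proof -
  have "drop k (tl Z @ [c]) = drop (Suc k) Z @ [c]"
    using assms by (simp add: drop_Suc)
  moreover have "n - k = Suc (n - Suc k)" using assms(1) by simp
  then have "take (n - k) X = take (n - Suc k) X @ [X ! (n - Suc k)]"
    using assms by (simp add: take_Suc_conv_app_nth)
  ultimately show ?thesis by simp
qed

lemma last_eq_nth_if_drop_eq_take:
  assumes "Suc k < n" "length Z = n" "length X = n" and overlap: "drop (Suc k) Z = take (n - Suc k) X"
  shows "last Z = X ! (n - Suc k - 1)"
proof -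
  have "last Z = last (drop (Suc k) Z)" using assms(1,2) by (simp add: last_drop)
  also have "\<dots> = last (take (n - Suc k) X)" by (simp add: overlap)
  also have "\<dots> = X ! (n - Suc k - 1)"
    using assms(1,3) by (subst last_conv_nth) auto
  finally show ?thesis .
qed

lemma drop_last_eq_take_iff:
  assumes "u \<noteq> []"
  shows "drop (length u - 1) u = take (length u - (length u - 1)) u \<longleftrightarrow> last u = hd u"
proof -
  have "drop (length u - 1) u = [last u]" using assms by (cases u rule: rev_cases) auto
  moreover have "take (length u - (length u - 1)) u = [hd u]" using assms by (cases u) auto
  ultimately show ?thesis by simp
qed

section \<open>Higher block matrices\<close>

locale weighted_shift =
  fixes N :: nat and A :: "nat \<Rightarrow> nat \<Rightarrow> nat" and p :: "nat \<Rightarrow> nat \<Rightarrow> 'a::idom" and z :: 'a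
  assumes irreducible: "irreducible_01 N A"
    and weight_eq_0: "\<And>i j. i \<in> alphabet N \<Longrightarrow> j \<in> alphabet N \<Longrightarrow> A i j \<noteq> 1 \<Longrightarrow> p i j = 0"
begin

abbreviation words :: "nat \<Rightarrow> nat list set" where
  "words n \<equiv> allowed_words N A n"

definition block_matrix :: "nat \<Rightarrow> nat list \<Rightarrow> nat list \<Rightarrow> 'a" where
  "block_matrix n X Y = (if star_defined X Y \<and> star X Y \<in> words (Suc n) then p (last X) (last Y) else 0)"

definition char_det :: 'a where
  "char_det = det_on (alphabet N) (id_minus z p)"

definition char_adj :: "nat \<Rightarrow> nat \<Rightarrow> 'a" where
  "char_adj = adj_on (alphabet N) (id_minus z p)"

lemma block_matrix_singleton:
  assumes i: "i \<in> alphabet N" and j: "j \<in> alphabet N"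
  shows "block_matrix 1 [i] [j] = p i j"
proof (cases "A i j = 1")
  case True
  then have "[i] @ [j] \<in> words (Suc 1)"
    using allowed_words_snoc[OF irreducible allowed_words_singleton[OF irreducible i] _ j] by simp
  then show ?thesis by (simp add: block_matrix_def star_defined_def star_def)
next
  case False
  then show ?thesis using weight_eq_0[OF i j] by (simp add: block_matrix_def)
qed

lemma det_block_matrix_1: "det_on (words 1) (id_minus z (block_matrix 1)) = char_det"
proof -
  have "bij_betw (\<lambda>i. [i]) (alphabet N) (words 1)"
  proof (rule bij_betwI')
    fix w assume "w \<in> words 1"
    then have "length w = 1" "set w \<subseteq> alphabet N" using allowed_wordsD by blast+
    then show "\<exists>i\<in>alphabet N. w = [i]" by (cases w) auto
  qed (use allowed_words_singleton[OF irreducible] in auto)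
  then have "det_on (words 1) (id_minus z (block_matrix 1))
      = det_on (alphabet N) (\<lambda>i j. id_minus z (block_matrix 1) [i] [j])"
    by (rule det_on_reindex) simp
  also have "\<dots> = char_det"
    unfolding char_det_def
  proof (rule det_on_cong)
    fix i j assume "i \<in> alphabet N" "j \<in> alphabet N"
    then have "block_matrix 1 [i] [j] = p i j" by (rule block_matrix_singleton)
    then show "id_minus z (block_matrix 1) [i] [j] = id_minus z p i j" by (simp add: id_minus_def)
  qed
  finally show ?thesis .
qed

text \<open>Here the allowedness of \<open>X * Y = hd X # Y\<close> is automatic: \<open>Y\<close> is allowed and the new first
  transition is the first transition of \<open>X\<close>.\<close>

lemma block_matrix_Suc:
  assumes "n \<ge> 1" and X: "X \<in> words (Suc n)" and Y: "Y \<in> words (Suc n)"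
  shows "block_matrix (Suc n) X Y = (if tl X = butlast Y then p (last X) (last Y) else 0)"
proof (cases "tl X = butlast Y")
  case True
  have lengths: "length X = Suc n" "length Y = Suc n" using X Y allowed_wordsD by blast+
  then obtain x X' where X_eq: "X = x # X'" by (cases X) auto
  have star_eq: "star X Y = x # Y"
    using True lengths X_eq by (cases Y rule: rev_cases) (auto simp: star_def)
  have "hd Y = X ! 1"
    using True lengths X_eq \<open>n \<ge> 1\<close> by (cases Y rule: rev_cases) (auto simp: hd_conv_nth nth_append)
  then have "A x (hd Y) = 1" using allowed_wordsD(3)[OF X, of 0] \<open>n \<ge> 1\<close> X_eq by simp
  moreover have "x \<in> alphabet N" using allowed_wordsD(2)[OF X] X_eq by simp
  ultimately have "star X Y \<in> words (Suc (Suc n))"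
    unfolding star_eq using allowed_words_Cons[OF Y] by simp
  then show ?thesis using True lengths X_eq by (simp add: block_matrix_def star_defined_def)
next
  case False
  then show ?thesis by (simp add: block_matrix_def star_defined_def)
qed

text \<open>\<open>I - z P\<^sub>n\<^sub>+\<^sub>1\<close> factors as \<open>I - D E\<close> with \<open>I - E D = I - z P\<^sub>n\<close>, where \<open>D\<close> deletes the
  first letter and \<open>E\<close> appends one.\<close>

lemma det_block_matrix_Suc:
  assumes "n \<ge> 1"
  shows "det_on (words (Suc n)) (id_minus z (block_matrix (Suc n)))
       = det_on (words n) (id_minus z (block_matrix n))"
proof -
  define D where "D X W = z * of_bool (W = tl X)" for X W :: "nat list"
  define E where "E W Y = (if W = butlast Y then p (last W) (last Y) else 0)" for W Y :: "nat list"
  have DE: "id_minus z (block_matrix (Suc n)) X Y = (if X = Y then 1 else 0) - (\<Sum>W\<in>words n. D X W * E W Y)"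
    if X: "X \<in> words (Suc n)" and Y: "Y \<in> words (Suc n)" for X Y
  proof -
    have last_tl: "last (tl X) = last X"
      using allowed_wordsD(1)[OF X] assms by (cases X) auto
    have "(\<Sum>W\<in>words n. D X W * E W Y) = (\<Sum>W\<in>words n. if W = tl X then z * E W Y else 0)"
      by (rule sum.cong) (simp_all add: D_def)
    also have "\<dots> = z * E (tl X) Y"
      using allowed_words_tl[OF X] by (simp add: finite_allowed_words)
    also have "E (tl X) Y = block_matrix (Suc n) X Y"
      by (simp only: E_def block_matrix_Suc[OF assms X Y] last_tl)
    finally show ?thesis by (simp add: id_minus_def)
  qed
  have ED: "(if W = W' then 1 else 0) - (\<Sum>Y\<in>words (Suc n). E W Y * D Y W') = id_minus z (block_matrix n) W W'"
    if W: "W \<in> words n" and W': "W' \<in> words n" for W W'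
  proof -
    have "E W Y * D Y W' = (if Y = star W W' then of_bool (star_defined W W') * z * p (last W) (last W') else 0)"
      if "Y \<in> words (Suc n)" for Y
      using star_defined_star_eq_iff[of Y W W'] allowed_wordsD(1)[OF that] assms
      by (auto simp: D_def E_def star_def)
    then have "(\<Sum>Y\<in>words (Suc n). E W Y * D Y W') = z * block_matrix n W W'"
      by (simp add: sum.delta' finite_allowed_words block_matrix_def cong: sum.cong)
    then show ?thesis by (simp add: id_minus_def)
  qed
  have "det_on (words (Suc n)) (id_minus z (block_matrix (Suc n)))
      = det_on (words (Suc n)) (\<lambda>X Y. (if X = Y then 1 else 0) - (\<Sum>W\<in>words n. D X W * E W Y))"
    by (rule det_on_cong) (rule DE)
  also have "\<dots> = det_on (words n) (\<lambda>W W'. (if W = W' then 1 else 0) - (\<Sum>Y\<in>words (Suc n). E W Y * D Y W'))"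
    by (rule det_on_one_minus_mult_commute) (simp_all add: finite_allowed_words)
  also have "\<dots> = det_on (words n) (id_minus z (block_matrix n))"
    by (rule det_on_cong) (rule ED)
  finally show ?thesis .
qed

lemma det_block_matrix:
  assumes "n \<ge> 1"
  shows "det_on (words n) (id_minus z (block_matrix n)) = char_det"
  using assms
proof (induction n rule: nat_induct_at_least)
  case base
  then show ?case by (rule det_block_matrix_1)
next
  case (Suc n)
  then show ?case by (simp add: det_block_matrix_Suc)
qed

lemma block_matrix_snoc:
  assumes "n \<ge> 1" "Z \<in> words n" "c \<in> alphabet N"
  shows "block_matrix n Z (tl Z @ [c]) = p (last Z) c"
proof (cases "A (last Z) c = 1")
  case True
  then have "Z @ [c] \<in> words (Suc n)"
    using assms by (intro allowed_words_snoc[OF irreducible])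
  then show ?thesis
    using allowed_wordsD(1)[OF assms(2)] assms(1) by (auto simp: block_matrix_def star_defined_def star_def)
next
  case False
  have "Z \<noteq> []" using allowed_wordsD(1)[OF assms(2)] assms(1) by auto
  then have "last Z \<in> alphabet N" using allowed_wordsD(2)[OF assms(2)] last_in_set by blast
  then show ?thesis using False weight_eq_0 assms(3) by (simp add: block_matrix_def)
qed

lemma block_matrix_nonzero:
  assumes "block_matrix n Z Y \<noteq> 0"
  shows "Y \<in> words n" "last Y \<in> alphabet N" "Y = tl Z @ [last Y]"
proof -
  have "star_defined Z Y" and star: "Z @ [last Y] \<in> words (Suc n)"
    using assms by (auto simp: block_matrix_def star_def split: if_split_asm)
  then have "Z \<noteq> []" "Y \<noteq> []" "tl Z = butlast Y"
    by (auto simp: star_defined_def)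
  then show Y: "Y = tl Z @ [last Y]" by simp
  show "Y \<in> words n"
    using allowed_words_tl[OF star] \<open>Z \<noteq> []\<close> by (subst Y) simp
  show "last Y \<in> alphabet N"
    using allowed_wordsD(2)[OF star] by simp
qed

lemma sum_block_matrix:
  assumes "n \<ge> 1" "Z \<in> words n"
  shows "(\<Sum>Y\<in>words n. block_matrix n Z Y * F Y) = (\<Sum>c\<in>alphabet N. p (last Z) c * F (tl Z @ [c]))"
proof -
  define g where "g Y = block_matrix n Z Y * F Y" for Y
  let ?E = "(\<lambda>c. tl Z @ [c]) ` alphabet N"
  have vanish: "g Y = 0" if "Y \<notin> words n \<inter> ?E" for Y
  proof (rule ccontr)
    assume "g Y \<noteq> 0"
    then have "block_matrix n Z Y \<noteq> 0" by (simp add: g_def)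
    from block_matrix_nonzero[OF this] have "Y \<in> words n \<inter> ?E" by (metis IntI imageI)
    with that show False by blast
  qed
  have "(\<Sum>Y\<in>words n. g Y) = (\<Sum>Y\<in>words n \<inter> ?E. g Y)"
    by (intro sum.mono_neutral_right ballI vanish) (auto simp: finite_allowed_words)
  also have "\<dots> = (\<Sum>Y\<in>?E. g Y)"
    by (intro sum.mono_neutral_left ballI vanish) auto
  also have "\<dots> = (\<Sum>c\<in>alphabet N. g (tl Z @ [c]))"
    by (simp add: sum.reindex inj_on_def)
  finally show ?thesis
    using assms by (simp add: g_def block_matrix_snoc)
qed

text \<open>\<open>suffix_weight u s\<close> is the paper's \<open>\<delta>\<^sub>s\<^sub>,\<^sub>u\<^sub>,\<^sub>u\<close>, and \<open>correlation u u\<close> is \<open>\<tau>\<^sub>u(z)\<close>.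
  By \<open>mult_block_adj\<close>, \<open>block_adj\<close> is the adjugate of \<open>I - z P\<^sub>n\<close> whenever \<open>det (I - z P) \<noteq> 0\<close>.\<close>

definition suffix_weight :: "nat list \<Rightarrow> nat \<Rightarrow> 'a" where
  "suffix_weight X k = (\<Prod>j\<in>{length X - k..length X - 1}. p (X ! (j - 1)) (X ! j))"

definition correlation :: "nat list \<Rightarrow> nat list \<Rightarrow> 'a" where
  "correlation Y X =
     (\<Sum>k<length X. of_bool (drop k Y = take (length X - k) X) * suffix_weight X k * z ^ k)"

definition block_adj :: "nat list \<Rightarrow> nat list \<Rightarrow> 'a" where
  "block_adj Y X = char_det * correlation Y X
     + z ^ (length X - 1) * suffix_weight X (length X - 1)
       * (char_adj (last Y) (hd X) - of_bool (last Y = hd X) * char_det)"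

lemma suffix_weight_0: "X \<noteq> [] \<Longrightarrow> suffix_weight X 0 = 1"
  by (simp add: suffix_weight_def)

lemma suffix_weight_Suc:
  assumes "Suc k < length X"
  shows "suffix_weight X (Suc k) = p (X ! (length X - Suc k - 1)) (X ! (length X - Suc k)) * suffix_weight X k"
proof -
  have "{length X - Suc k..length X - 1} = insert (length X - Suc k) {length X - k..length X - 1}"
    using assms by auto
  then show ?thesis
    using assms by (simp add: suffix_weight_def)
qed

lemma sum_letters_overlap:
  assumes "k < n" "length Z = n" "X \<in> words n"
  shows "(\<Sum>c\<in>alphabet N. p a c * of_bool (drop k (tl Z @ [c]) = take (n - k) X))
       = of_bool (drop (Suc k) Z = take (n - Suc k) X) * p a (X ! (n - Suc k))"
proof -
  have "X ! (n - Suc k) \<in> alphabet N"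
    using allowed_wordsD(1,2)[OF assms(3)] assms(1) nth_mem[of "n - Suc k" X] by auto
  then show ?thesis
    using drop_tl_snoc_eq_take_iff[OF assms(1,2) allowed_wordsD(1)[OF assms(3)]]
    by (simp add: of_bool_def if_distrib[of "(*) _"] sum.delta' cong: if_cong)
qed

lemma sum_letters_correlation_snoc:
  assumes lZ: "length Z = n" and X: "X \<in> words n"
  shows "(\<Sum>c\<in>alphabet N. p a c * correlation (tl Z @ [c]) X)
       = (\<Sum>k<n. of_bool (drop (Suc k) Z = take (n - Suc k) X) * p a (X ! (n - Suc k))
           * suffix_weight X k * z ^ k)"
proof -
  have lX: "length X = n" using X allowed_wordsD by blast
  have inner: "(\<Sum>c\<in>alphabet N. p a c * (of_bool (drop k (tl Z @ [c]) = take (n - k) X)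
      * (suffix_weight X k * z ^ k)))
      = of_bool (drop (Suc k) Z = take (n - Suc k) X) * p a (X ! (n - Suc k)) * suffix_weight X k * z ^ k"
    if "k < n" for k
  proof -
    have "(\<Sum>c\<in>alphabet N. p a c * (of_bool (drop k (tl Z @ [c]) = take (n - k) X)
        * (suffix_weight X k * z ^ k)))
        = (\<Sum>c\<in>alphabet N. p a c * of_bool (drop k (tl Z @ [c]) = take (n - k) X))
          * (suffix_weight X k * z ^ k)"
      by (simp only: sum_distrib_right mult.assoc)
    then show ?thesis by (simp only: sum_letters_overlap[OF that lZ X] mult.assoc)
  qed
  have "(\<Sum>c\<in>alphabet N. p a c * correlation (tl Z @ [c]) X)
      = (\<Sum>c\<in>alphabet N. \<Sum>k<n. p a c * (of_bool (drop k (tl Z @ [c]) = take (n - k) X)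
          * (suffix_weight X k * z ^ k)))"
    by (simp only: correlation_def lX sum_distrib_left mult.assoc)
  also have "\<dots> = (\<Sum>k<n. of_bool (drop (Suc k) Z = take (n - Suc k) X) * p a (X ! (n - Suc k))
      * suffix_weight X k * z ^ k)"
    by (subst sum.swap) (intro sum.cong refl inner, simp)
  finally show ?thesis .
qed

text \<open>Term \<open>k\<close> of the correlation of \<open>tl Z @ [c]\<close> with \<open>X\<close> matches term \<open>k + 1\<close> of that of \<open>Z\<close>;
  the term \<open>k = 0\<close> (that is, \<open>Z = X\<close>) is lost and a new term of degree \<open>n\<close> appears.\<close>

lemma correlation_snoc:
  assumes n: "n \<ge> 1" and Z: "Z \<in> words n" and X: "X \<in> words n"
  shows "z * (\<Sum>c\<in>alphabet N. p (last Z) c * correlation (tl Z @ [c]) X)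
       = correlation Z X - of_bool (Z = X) + z ^ n * suffix_weight X (n - 1) * p (last Z) (hd X)"
proof -
  have lZ: "length Z = n" and lX: "length X = n" using Z X allowed_wordsD by blast+
  obtain m where m: "n = Suc m" using n by (cases n) auto
  define t where "t k = of_bool (drop k Z = take (n - k) X) * suffix_weight X k * z ^ k" for k
  define s where "s k = of_bool (drop (Suc k) Z = take (n - Suc k) X) * p (last Z) (X ! (n - Suc k))
      * suffix_weight X k * z ^ k" for k
  have sum_s: "(\<Sum>c\<in>alphabet N. p (last Z) c * correlation (tl Z @ [c]) X) = (\<Sum>k<n. s k)"
    unfolding s_def by (rule sum_letters_correlation_snoc[OF lZ X])
  have shift: "z * s k = t (Suc k)" if "k < m" for k
  proof (cases "drop (Suc k) Z = take (n - Suc k) X")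
    case True
    then have "last Z = X ! (n - Suc k - 1)"
      using that m lZ lX by (intro last_eq_nth_if_drop_eq_take) auto
    then show ?thesis
      using True that m lX by (simp add: s_def t_def suffix_weight_Suc mult_ac)
  qed (simp add: s_def t_def)
  have "hd X = X ! 0" using lX m by (cases X) auto
  then have top: "s m = p (last Z) (hd X) * suffix_weight X m * z ^ m"
    using m lZ lX by (simp add: s_def)
  have "suffix_weight X 0 = 1" using lX n by (intro suffix_weight_0) auto
  then have "t 0 = of_bool (Z = X)" using lZ lX by (simp add: t_def)
  moreover have "correlation Z X = t 0 + (\<Sum>k<m. t (Suc k))"
    unfolding correlation_def lX m t_def by (rule sum.lessThan_Suc_shift)
  ultimately show ?thesis
    unfolding sum_s m using shift top by (simp add: sum_distrib_left algebra_simps)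
qed

lemma sum_weight_char_adj:
  assumes "a \<in> alphabet N" "b \<in> alphabet N"
  shows "z * (\<Sum>c\<in>alphabet N. p a c * char_adj c b) = char_adj a b - of_bool (a = b) * char_det"
proof -
  have "(\<Sum>c\<in>alphabet N. id_minus z p a c * char_adj c b) = of_bool (a = b) * char_det"
    unfolding char_adj_def char_det_def
    using mult_adj_on[OF finite_alphabet assms, of "id_minus z p"] by simp
  moreover have "(\<Sum>c\<in>alphabet N. id_minus z p a c * char_adj c b)
      = (\<Sum>c\<in>alphabet N. (if a = c then char_adj c b else 0) - z * (p a c * char_adj c b))"
    by (intro sum.cong) (simp_all add: id_minus_def left_diff_distrib)
  moreover have "\<dots> = char_adj a b - z * (\<Sum>c\<in>alphabet N. p a c * char_adj c b)"
    using assms(1) by (simp add: sum_subtractf sum_distrib_left)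
  ultimately show ?thesis by (simp add: algebra_simps)
qed

lemma mult_block_adj:
  assumes n: "n \<ge> 1" and Z: "Z \<in> words n" and X: "X \<in> words n"
  shows "(\<Sum>Y\<in>words n. id_minus z (block_matrix n) Z Y * block_adj Y X) = of_bool (Z = X) * char_det"
proof -
  obtain m where m: "n = Suc m" using n by (cases n) auto
  have lX: "length X = n" using X allowed_wordsD by blast
  define a where "a = last Z"
  define b where "b = hd X"
  define w where "w = z ^ m * suffix_weight X m"
  define S1 where "S1 = (\<Sum>c\<in>alphabet N. p a c * correlation (tl Z @ [c]) X)"
  define S2 where "S2 = (\<Sum>c\<in>alphabet N. p a c * char_adj c b)"
  have "Z \<noteq> []" "X \<noteq> []" using allowed_wordsD(1)[OF Z] lX n by auto
  then have a: "a \<in> alphabet N" and b: "b \<in> alphabet N"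
    using allowed_wordsD(2)[OF Z] allowed_wordsD(2)[OF X] unfolding a_def b_def
    by (auto intro: last_in_set hd_in_set)
  have zS1: "z * S1 = correlation Z X - of_bool (Z = X) + z * w * p a b"
    using correlation_snoc[OF n Z X] by (simp add: S1_def a_def b_def w_def m mult_ac)
  have zS2: "z * S2 = char_adj a b - of_bool (a = b) * char_det"
    using sum_weight_char_adj[OF a b] by (simp add: S2_def)
  have row: "p a c * block_adj (tl Z @ [c]) X = char_det * (p a c * correlation (tl Z @ [c]) X)
      + w * (p a c * char_adj c b) - (if c = b then w * p a b * char_det else 0)" for c
    by (cases "c = b") (simp_all add: block_adj_def lX m w_def b_def algebra_simps)
  have "(\<Sum>Y\<in>words n. id_minus z (block_matrix n) Z Y * block_adj Y X)
      = (\<Sum>Y\<in>words n. (if Z = Y then block_adj Y X else 0) - z * (block_matrix n Z Y * block_adj Y X))"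
    by (intro sum.cong) (simp_all add: id_minus_def left_diff_distrib)
  also have "\<dots> = block_adj Z X - z * (\<Sum>Y\<in>words n. block_matrix n Z Y * block_adj Y X)"
    using Z by (simp add: sum_subtractf sum_distrib_left finite_allowed_words)
  also have "(\<Sum>Y\<in>words n. block_matrix n Z Y * block_adj Y X)
      = (\<Sum>c\<in>alphabet N. p a c * block_adj (tl Z @ [c]) X)"
    unfolding a_def by (rule sum_block_matrix[OF n Z])
  also have "\<dots> = char_det * S1 + w * S2 - w * p a b * char_det"
    using b by (simp add: row S1_def S2_def sum.distrib sum_subtractf sum_distrib_left)
  also have "block_adj Z X - z * (char_det * S1 + w * S2 - w * p a b * char_det)
      = char_det * correlation Z X + w * (char_adj a b - of_bool (a = b) * char_det)
        - char_det * (z * S1) - w * (z * S2) + z * w * p a b * char_det"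
    by (simp add: block_adj_def lX m w_def a_def b_def algebra_simps)
  also have "\<dots> = of_bool (Z = X) * char_det"
    unfolding zS1 zS2 by (simp add: algebra_simps)
  finally show ?thesis .
qed

subsection \<open>Forbidding one word\<close>

definition forbidden_block :: "nat list \<Rightarrow> nat list \<Rightarrow> nat list \<Rightarrow> 'a" where
  "forbidden_block u X Y =
     (if star_defined X Y \<and> star X Y \<in> words (length u) \<and> star X Y \<noteq> u then p (last X) (last Y) else 0)"

lemma forbidden_block_eq:
  assumes "length u \<ge> 2"
  shows "forbidden_block u X Y = (if X = butlast u \<and> Y = tl u then 0 else block_matrix (length u - 1) X Y)"
proof (cases "X = butlast u \<and> Y = tl u")
  case True
  then have "star_defined X Y \<and> star X Y = u" using star_defined_star_eq_iff[OF assms] by blast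
  then show ?thesis using True by (simp add: forbidden_block_def)
next
  case False
  then have "\<not> (star_defined X Y \<and> star X Y = u)" using star_defined_star_eq_iff[OF assms] by blast
  moreover have "Suc (length u - 1) = length u" using assms by simp
  ultimately show ?thesis using False by (auto simp: forbidden_block_def block_matrix_def)
qed

lemma block_matrix_butlast_tl:
  assumes "length u \<ge> 2" "u \<in> words (length u)"
  shows "block_matrix (length u - 1) (butlast u) (tl u) = p (last (butlast u)) (last u)"
proof -
  have "star_defined (butlast u) (tl u) \<and> star (butlast u) (tl u) = u"
    using star_defined_star_eq_iff[OF assms(1)] by blast
  moreover have "last (tl u) = last u" using assms(1) by (cases u) auto
  moreover have "Suc (length u - 1) = length u" using assms(1) by simp
  ultimately show ?thesis using assms(2) by (simp add: block_matrix_def)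
qed

lemma det_forbidden_block:
  assumes r: "length u \<ge> 2" and u: "u \<in> words (length u)" and nonzero: "char_det \<noteq> 0"
  shows "det_on (words (length u - 1)) (id_minus z (forbidden_block u))
       = char_det + z * p (last (butlast u)) (last u) * block_adj (tl u) (butlast u)"
proof -
  let ?n = "length u - 1" and ?t = "z * p (last (butlast u)) (last u)"
  have n: "?n \<ge> 1" using r by simp
  have entry: "id_minus z (forbidden_block u) X Y
      = id_minus z (block_matrix ?n) X Y + of_bool (X = butlast u \<and> Y = tl u) * ?t" for X Y
    using block_matrix_butlast_tl[OF r u] by (auto simp: id_minus_def forbidden_block_eq[OF r])
  have "det_on (words ?n) (id_minus z (forbidden_block u))
      = det_on (words ?n) (\<lambda>X Y. id_minus z (block_matrix ?n) X Y + of_bool (X = butlast u \<and> Y = tl u) * ?t)"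
    by (rule det_on_cong) (rule entry)
  also have "\<dots> = char_det + ?t * block_adj (tl u) (butlast u)"
    using det_on_add_single_entry[OF finite_allowed_words allowed_words_butlast[OF u] allowed_words_tl[OF u],
        where M = "id_minus z (block_matrix ?n)" and G = block_adj and t = ?t]
      mult_block_adj[OF n] det_block_matrix[OF n] nonzero
    by simp
  finally show ?thesis .
qed

lemma suffix_weight_butlast:
  assumes "length u \<ge> 2" "k < length u - 1"
  shows "p (last (butlast u)) (last u) * suffix_weight (butlast u) k = suffix_weight u (Suc k)"
proof -
  define n where "n = length u - 1"
  have lu: "length u = Suc n" and n: "n \<ge> 1" using assms(1) by (auto simp: n_def)
  have "suffix_weight (butlast u) k = (\<Prod>j\<in>{n - k..n - 1}. p (u ! (j - 1)) (u ! j))"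
    unfolding suffix_weight_def
    by (intro prod.cong) (use lu n in \<open>auto simp: nth_butlast\<close>)
  moreover have "{length u - Suc k..length u - 1} = insert n {n - k..n - 1}"
    using lu n assms(2) by (auto simp: n_def)
  moreover have "last (butlast u) = u ! (n - 1)" "last u = u ! n"
  proof -
    obtain ys y where u: "u = ys @ [y]" using lu by (cases u rule: rev_cases) auto
    then have "length ys = n" "ys \<noteq> []" using lu n by auto
    then show "last (butlast u) = u ! (n - 1)" "last u = u ! n"
      using n by (simp_all add: u last_conv_nth nth_append)
  qed
  ultimately show ?thesis
    using n by (simp add: suffix_weight_def)
qed

lemma correlation_tl_butlast:
  assumes "length u \<ge> 2"
  shows "z * p (last (butlast u)) (last u) * correlation (tl u) (butlast u) = correlation u u - 1"
proof -
  define n where "n = length u - 1"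
  have lu: "length u = Suc n" and "u \<noteq> []" using assms by (auto simp: n_def)
  define t where "t k = of_bool (drop k u = take (length u - k) u) * suffix_weight u k * z ^ k" for k
  have "z * p (last (butlast u)) (last u) * correlation (tl u) (butlast u) = (\<Sum>k<n. t (Suc k))"
    unfolding correlation_def sum_distrib_left
  proof (rule sum.cong)
    show "{..<length (butlast u)} = {..<n}" using lu by simp
  next
    fix k assume "k \<in> {..<n}"
    then have k: "k < n" by simp
    have "drop k (tl u) = take (n - k) (butlast u) \<longleftrightarrow> drop (Suc k) u = take (length u - Suc k) u"
      using k lu by (simp add: drop_Suc take_butlast)
    then show "z * p (last (butlast u)) (last u)
        * (of_bool (drop k (tl u) = take (length (butlast u) - k) (butlast u)) * suffix_weight (butlast u) k * z ^ k)
        = t (Suc k)"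
      using suffix_weight_butlast[OF assms, of k] k lu by (simp add: t_def mult_ac)
  qed
  also have "\<dots> = (\<Sum>k<Suc n. t k) - t 0"
    by (subst sum.lessThan_Suc_shift) simp
  also have "(\<Sum>k<Suc n. t k) = correlation u u"
    by (simp only: correlation_def t_def lu)
  also have "t 0 = 1" using \<open>u \<noteq> []\<close> by (simp add: t_def suffix_weight_0)
  finally show ?thesis .
qed

lemma det_forbidden_block_formula:
  assumes r: "length u \<ge> 2" and u: "u \<in> words (length u)" and nonzero: "char_det \<noteq> 0"
  shows "det_on (words (length u - 1)) (id_minus z (forbidden_block u))
       = (correlation u u - z ^ (length u - 1) * of_bool (last u = hd u) * suffix_weight u (length u - 1))
           * char_det
         + z ^ (length u - 1) * suffix_weight u (length u - 1) * char_adj (last u) (hd u)"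
proof -
  obtain m where lu: "length u = Suc (Suc m)" using r by (metis add_2_eq_Suc le_Suc_ex)
  let ?p = "p (last (butlast u)) (last u)" and ?w = "z ^ m * suffix_weight (butlast u) m"
  have w: "z * ?p * ?w = z ^ Suc m * suffix_weight u (Suc m)"
    using suffix_weight_butlast[OF r, of m] lu by (simp add: mult_ac)
  have "last (tl u) = last u" using lu by (cases u) auto
  moreover have "hd (butlast u) = hd u" using lu by (cases u) auto
  ultimately have adj: "block_adj (tl u) (butlast u) = char_det * correlation (tl u) (butlast u)
      + ?w * (char_adj (last u) (hd u) - of_bool (last u = hd u) * char_det)"
    using lu by (simp add: block_adj_def)
  have "det_on (words (length u - 1)) (id_minus z (forbidden_block u))
      = char_det + char_det * (z * ?p * correlation (tl u) (butlast u))
        + (z * ?p * ?w) * (char_adj (last u) (hd u) - of_bool (last u = hd u) * char_det)"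
    unfolding det_forbidden_block[OF r u nonzero] adj by (simp add: algebra_simps)
  also have "\<dots> = (correlation u u - z ^ Suc m * of_bool (last u = hd u) * suffix_weight u (Suc m))
      * char_det + z ^ Suc m * suffix_weight u (Suc m) * char_adj (last u) (hd u)"
    unfolding w correlation_tl_butlast[OF r] by (simp add: algebra_simps)
  finally show ?thesis using lu by simp
qed


end


section \<open>Evaluation at a complex number\<close>

lemma poly_det_on: "poly (det_on I M) x = det_on I (\<lambda>a b. poly (M a b) x)"
  unfolding det_on_def by (simp add: poly_sum poly_prod)

lemma poly_adj_on: "poly (adj_on I M i j) x = adj_on I (\<lambda>a b. poly (M a b) x) i j"
  unfolding adj_on_def poly_det_on by (rule arg_cong[where f = "det_on I"]) (auto simp: fun_eq_iff)

lemma poly_of_bool [simp]: "poly (of_bool b) x = of_bool b"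
  by (cases b) simp_all

lemma poly_id_minus: "poly (id_minus [:0, 1:] M a b) x = id_minus x (\<lambda>a b. poly (M a b) x) a b"
  by (cases "a = b") (simp_all add: id_minus_def)

lemma det_on_id_minus_X_nonzero:
  fixes M :: "'i \<Rightarrow> 'i \<Rightarrow> 'a::comm_ring_1 poly"
  assumes "finite I"
  shows "det_on I (id_minus [:0, 1:] M) \<noteq> 0"
proof
  assume "det_on I (id_minus [:0, 1:] M) = 0"
  moreover have "poly (det_on I (id_minus [:0, 1:] M)) 0 = 1"
    unfolding poly_det_on poly_id_minus using det_on_identity[OF assms] by (simp add: id_minus_def)
  ultimately show False by simp
qed

locale stochastic_shift =
  fixes N :: nat and A :: "nat \<Rightarrow> nat \<Rightarrow> nat" and P :: "nat \<Rightarrow> nat \<Rightarrow> real"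
  assumes irreducible: "irreducible_01 N A"
    and stochastic: "row_stochastic_compatible N A P"

text \<open>The identity is proved for \<open>z\<close> the indeterminate of \<open>complex poly\<close>, where \<open>det (I - z P)\<close> is
  nonzero as needed in \<open>det_on_add_single_entry\<close>, and then evaluated.\<close>

sublocale stochastic_shift \<subseteq> formal: weighted_shift N A "\<lambda>i j. [:complex_of_real (P i j):]" "[:0, 1:]"
proof
  show "irreducible_01 N A" by (rule irreducible)
  fix i j assume "i \<in> alphabet N" "j \<in> alphabet N" "A i j \<noteq> 1"
  then have "0 \<le> P i j" "\<not> 0 < P i j"
    using stochastic unfolding row_stochastic_compatible_def by auto
  then have "P i j = 0" by simp
  then show "[:complex_of_real (P i j):] = 0" by simp
qed

context stochastic_shift
begin

lemma poly_char_det: "poly formal.char_det z = det_on (alphabet N) (id_minus z (\<lambda>i j. of_real (P i j)))"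
  unfolding formal.char_det_def poly_det_on poly_id_minus by simp

lemma poly_char_adj:
  "poly (formal.char_adj a b) z = adj_on (alphabet N) (id_minus z (\<lambda>i j. of_real (P i j))) a b"
  unfolding formal.char_adj_def poly_adj_on poly_id_minus by simp

lemma poly_suffix_weight: "poly (formal.suffix_weight u s) z = of_real (delta_s_uu P s u)"
  by (simp add: formal.suffix_weight_def delta_s_uu_def poly_prod)

lemma poly_correlation:
  assumes "u \<noteq> []"
  shows "poly (formal.correlation u u) z = tau_u P u z"
proof -
  have "{0..length u - 1} = {..<length u}" using assms by (cases u) auto
  moreover have "complex_of_real (c_uu s u) = of_bool (drop s u = take (length u - s) u)" for s
    by (simp add: c_uu_def)
  ultimately show ?thesis
    by (simp add: formal.correlation_def tau_u_def poly_sum poly_suffix_weight)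
qed

lemma poly_det_forbidden_block:
  assumes "u \<noteq> []"
  shows "poly (det_on (allowed_words N A (length u - 1)) (id_minus [:0, 1:] (formal.forbidden_block u))) z
       = det_on (allowed_words N A (length u - 1))
           (id_minus z (\<lambda>X Y. of_real (hadamard (B_single N A u) (higher_block_P N A P (length u - 1)) X Y)))"
proof -
  have "Suc (length u - 1) = length u" using assms by simp
  then show ?thesis
    unfolding poly_det_on
    by (intro det_on_cong)
      (simp add: id_minus_def formal.forbidden_block_def hadamard_def B_single_def higher_block_P_def)
qed

theorem det_forbidden_word_eq_f_u:
  assumes r: "length u \<ge> 2" and u: "u \<in> allowed_words N A (length u)"
  shows "det_on (allowed_words N A (length u - 1))
           (id_minus z (\<lambda>X Y. of_real (hadamard (B_single N A u) (higher_block_P N A P (length u - 1)) X Y)))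
         = f_u N P u z"
proof -
  have "u \<noteq> []" using r by auto
  have "formal.char_det \<noteq> 0"
    unfolding formal.char_det_def by (rule det_on_id_minus_X_nonzero) simp
  note formula = formal.det_forbidden_block_formula[OF r u this]
  have c: "complex_of_real (c_uu (length u - 1) u * delta_u P u)
      = of_bool (last u = hd u) * complex_of_real (delta_u P u)"
    using drop_last_eq_take_iff[OF \<open>u \<noteq> []\<close>] by (simp add: c_uu_def)
  have delta: "delta_s_uu P (length u - 1) u = delta_u P u"
    using r by (simp add: delta_s_uu_def delta_u_def)
  have poly_X: "poly [:0, 1:] z = z" by simp
  have "det_on (allowed_words N A (length u - 1))
      (id_minus z (\<lambda>X Y. of_real (hadamard (B_single N A u) (higher_block_P N A P (length u - 1)) X Y)))
      = poly (det_on (allowed_words N A (length u - 1)) (id_minus [:0, 1:] (formal.forbidden_block u))) z"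
    by (rule poly_det_forbidden_block[OF \<open>u \<noteq> []\<close>, symmetric])
  also have "\<dots> = (tau_u P u z - z ^ (length u - 1) * of_bool (last u = hd u) * of_real (delta_u P u))
        * det_on (alphabet N) (id_minus z (\<lambda>i j. of_real (P i j)))
      + z ^ (length u - 1) * of_real (delta_u P u)
        * adj_on (alphabet N) (id_minus z (\<lambda>i j. of_real (P i j))) (last u) (hd u)"
    unfolding formula
    by (simp only: poly_add poly_mult poly_diff poly_power poly_of_bool poly_X poly_correlation[OF \<open>u \<noteq> []\<close>]
        poly_suffix_weight delta poly_char_det poly_char_adj)
  also have "\<dots> = f_u N P u z"
    unfolding f_u_def tau_tilde_u_def c by (simp add: mult.assoc)
  finally show ?thesis .
qed

end

theorem theorem4p12:
  fixes N :: nat and A :: "nat \<Rightarrow> nat \<Rightarrow> nat" and P :: "nat \<Rightarrow> nat \<Rightarrow> real"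
    and u :: "nat list" and z :: complex
  assumes "zero_one_matrix N A"
    and "irreducible_01 N A"
    and "row_stochastic_compatible N A P"
    and "length u \<ge> 2"
    and "u \<in> allowed_words N A (length u)"
  shows "det_on (allowed_words N A (length u - 1))
           (id_minus z (\<lambda>X Y. of_real (hadamard (B_single N A u)
                                  (higher_block_P N A P (length u - 1)) X Y)))
         = f_u N P u z"
proof -
  interpret stochastic_shift N A P using assms(2,3) by unfold_locales
  show ?thesis using assms(4,5) by (rule det_forbidden_word_eq_f_u)
qed

end
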